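(* Let $X=\bigsqcup_{\lambda\in\Lambda}G_\lambda$ be an MCQ, $R$ a ring, $M$ a left $R$-module, and let $f_1,f_2:X\times X\to R$, $\phi_1:X\times X\to M$, $\phi_2:\bigsqcup_\lambda(G_\lambda\times G_\lambda)\to M$ be maps. On the set $\widetilde X=\bigsqcup_{\lambda\in\Lambda}(G_\lambda\times M)$ define $(x,u)\triangleleft(y,v):=(x\triangleleft y,\ f_1(x,y)u+f_2(x,y)v+\phi_1(x,y))$ for all $(x,u),(y,v)\in\widetilde X$, and $(a,u)(b,v):=(ab,\ u+f_1(a,a^{-1})v+\phi_2(a,b))$ for all $(a,u),(b,v)\in G_\lambda\times M$. If $(f_1,f_2;\phi_1,\phi_2)$ is an augmented MCQ Alexander pair, then $\widetilde X$ with these operations is an MCQ whose groups are the $G_\lambda\times M$; moreover the identity of $G_\lambda\times M$ is $(e_\lambda,-\phi_2(e_\lambda,e_\lambda))$ and the inverse of $(a,u)\in G_\lambda\times M$ is $(a^{-1},\,-f_1(a,a)u-\phi_2(a^{-1},a)-\phi_2(e_\lambda,e_\lambda))$. Conversely, if $M=R$ and $\widetilde X$ with these operations is an MCQ with groups $G_\lambda\times R$, then $(f_1,f_2;\phi_1,\phi_2)$ is an augmented MCQ Alexander pair.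
   Context: A multiple conjugation quandle (MCQ) is a set $X=\bigsqcup_{\lambda\in\Lambda}G_\lambda$ that is a disjoint union of groups $G_\lambda$, together with a binary operation $\triangleleft:X\times X\to X$ such that: (i) for all $a,b\in G_\lambda$, $a\triangleleft b=b^{-1}ab$; (ii) for all $x\in X$ and $a,b\in G_\lambda$, $x\triangleleft e_\lambda=x$ and $x\triangleleft(ab)=(x\triangleleft a)\triangleleft b$, where $e_\lambda$ is the identity of $G_\lambda$; (iii) for all $x,y,z\in X$, $(x\triangleleft y)\triangleleft z=(x\triangleleft z)\triangleleft(y\triangleleft z)$; (iv) for all $x\in X$ and $a,b\in G_\lambda$, the elements $a\triangleleft x$ and $b\triangleleft x$ lie in a common group $G_\mu$ and $(ab)\triangleleft x=(a\triangleleft x)(b\triangleleft x)$. For $x\in X$, $G_x$ denotes the group $G_\lambda$ containing $x$, $e_x$ its identity, and $x^{-1}$ the inverse of $x$ in $G_x$. $\bigsqcup_{\lambda}(G_\lambda\times G_\lambda)$ is the set of pairs of elements lying in a common group $G_\lambda$. Rings have a multiplicative identity $1\neq0$ and need not be commutative. An MCQ Alexander pair is a pair of maps $f_1,f_2:X\times X\to R$ such that: (A1) for all $a,b\in G_\lambda$: $f_1(a,b)+f_2(a,b)=f_1(a,a^{-1}b)$; (A2) for all $a,b\in G_\lambda$ and $x\in X$: $f_1(a,x)=f_1(b,x)$ and $f_2(ab,x)=f_2(a,x)+f_1(b\triangleleft x,a^{-1}\triangleleft x)f_2(b,x)$; (A3) for all $x\in X$ and $a,b\in G_\lambda$: $f_1(x,e_\lambda)=1$,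 $f_1(x,ab)=f_1(x\triangleleft a,b)f_1(x,a)$, $f_2(x,ab)=f_1(x\triangleleft a,b)f_2(x,a)$; (A4) for all $x,y,z\in X$: $f_1(x\triangleleft y,z)f_1(x,y)=f_1(x\triangleleft z,y\triangleleft z)f_1(x,z)$; $f_1(x\triangleleft y,z)f_2(x,y)=f_2(x\triangleleft z,y\triangleleft z)f_1(y,z)$; $f_2(x\triangleleft y,z)=f_1(x\triangleleft z,y\triangleleft z)f_2(x,z)+f_2(x\triangleleft z,y\triangleleft z)f_2(y,z)$. For an MCQ Alexander pair $(f_1,f_2)$ and a left $R$-module $M$, an $(f_1,f_2)$-twisted 2-cocycle is a pair of maps $\phi_1:X\times X\to M$, $\phi_2:\bigsqcup_\lambda(G_\lambda\times G_\lambda)\to M$ such that: (T1) for all $a,b,c\in G_\lambda$: $\phi_2(a,b)+\phi_2(ab,c)=f_1(a,a^{-1})\phi_2(b,c)+\phi_2(a,bc)$; (T2) for all $a,b\in G_\lambda$: $f_1(b,b^{-1})\phi_1(a,b)+\phi_2(b,b^{-1}ab)=\phi_2(a,b)$; (T3) for all $x\in X$, $a,b\in G_\lambda$: $f_2(x,ab)\phi_2(a,b)+\phi_1(x,ab)=f_1(x\triangleleft a,b)\phi_1(x,a)+\phi_1(x\triangleleft a,b)$; (T4) for all $x,y,z\in X$: $f_1(x\triangleleft y,z)\phi_1(x,y)+\phi_1(x\triangleleft y,z)=f_1(x\triangleleft z,y\triangleleft z)\phi_1(x,z)+f_2(x\triangleleft z,y\triangleleft z)\phi_1(y,z)+\phi_1(x\triangleleft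 z,y\triangleleft z)$; (T5) for all $a,b\in G_\lambda$, $x\in X$: $f_1(ab,x)\phi_2(a,b)+\phi_1(ab,x)=\phi_1(a,x)+f_1(a\triangleleft x,a^{-1}\triangleleft x)\phi_1(b,x)+\phi_2(a\triangleleft x,b\triangleleft x)$. A quadruple $(f_1,f_2;\phi_1,\phi_2)$ is an augmented MCQ Alexander pair if $(f_1,f_2)$ is an MCQ Alexander pair and $(\phi_1,\phi_2)$ is an $(f_1,f_2)$-twisted 2-cocycle. *)

theory Defs
  imports "HOL-Algebra.Group"
begin

(* A multiple conjugation quandle X = disjoint union of the groups G l (l : Lam),
   with binary operation tri.  Only the values of tri on X matter. *)

definition mcq_set :: "'l set \<Rightarrow> ('l \<Rightarrow> 'a monoid) \<Rightarrow> 'a set" where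
  "mcq_set Lam G = (\<Union>l\<in>Lam. carrier (G l))"

definition mcq :: "'l set \<Rightarrow> ('l \<Rightarrow> 'a monoid) \<Rightarrow> ('a \<Rightarrow> 'a \<Rightarrow> 'a) \<Rightarrow> bool" where
  "mcq Lam G tri \<longleftrightarrow>
     (\<forall>l\<in>Lam. group (G l)) \<and>
     (\<forall>l\<in>Lam. \<forall>m\<in>Lam. l \<noteq> m \<longrightarrow> carrier (G l) \<inter> carrier (G m) = {}) \<and>
     (\<forall>x\<in>mcq_set Lam G. \<forall>y\<in>mcq_set Lam G. tri x y \<in> mcq_set Lam G) \<and>
     \<comment> \<open>(i)\<close>
     (\<forall>l\<in>Lam. \<forall>a\<in>carrier (G l). \<forall>b\<in>carrier (G l).
        tri a b = (inv\<^bsub>G l\<^esub> b \<otimes>\<^bsub>G l\<^esub> a) \<otimes>\<^bsub>G l\<^esub> b) \<and>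
     \<comment> \<open>(ii)\<close>
     (\<forall>x\<in>mcq_set Lam G. \<forall>l\<in>Lam.
        tri x \<one>\<^bsub>G l\<^esub> = x \<and>
        (\<forall>a\<in>carrier (G l). \<forall>b\<in>carrier (G l). tri x (a \<otimes>\<^bsub>G l\<^esub> b) = tri (tri x a) b)) \<and>
     \<comment> \<open>(iii)\<close>
     (\<forall>x\<in>mcq_set Lam G. \<forall>y\<in>mcq_set Lam G. \<forall>z\<in>mcq_set Lam G.
        tri (tri x y) z = tri (tri x z) (tri y z)) \<and>
     \<comment> \<open>(iv)\<close>
     (\<forall>x\<in>mcq_set Lam G. \<forall>l\<in>Lam. \<forall>a\<in>carrier (G l). \<forall>b\<in>carrier (G l).
        \<exists>m\<in>Lam. tri a x \<in> carrier (G m) \<and> tri b x \<in> carrier (G m) \<and>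
          tri (a \<otimes>\<^bsub>G l\<^esub> b) x = tri a x \<otimes>\<^bsub>G m\<^esub> tri b x)"

definition lmodule :: "('r::ring_1 \<Rightarrow> 'm::ab_group_add \<Rightarrow> 'm) \<Rightarrow> bool" where
  "lmodule s \<longleftrightarrow>
     (\<forall>r u v. s r (u + v) = s r u + s r v) \<and>
     (\<forall>r q u. s (r + q) u = s r u + s q u) \<and>
     (\<forall>r q u. s (r * q) u = s r (s q u)) \<and>
     (\<forall>u. s 1 u = u)"

definition alexander_pair ::
  "'l set \<Rightarrow> ('l \<Rightarrow> 'a monoid) \<Rightarrow> ('a \<Rightarrow> 'a \<Rightarrow> 'a) \<Rightarrow>
   ('a \<Rightarrow> 'a \<Rightarrow> 'r::ring_1) \<Rightarrow> ('a \<Rightarrow> 'a \<Rightarrow> 'r) \<Rightarrow> bool" where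
  "alexander_pair Lam G tri f1 f2 \<longleftrightarrow>
     \<comment> \<open>(A1)\<close>
     (\<forall>l\<in>Lam. \<forall>a\<in>carrier (G l). \<forall>b\<in>carrier (G l).
        f1 a b + f2 a b = f1 a (inv\<^bsub>G l\<^esub> a \<otimes>\<^bsub>G l\<^esub> b)) \<and>
     \<comment> \<open>(A2)\<close>
     (\<forall>l\<in>Lam. \<forall>a\<in>carrier (G l). \<forall>b\<in>carrier (G l). \<forall>x\<in>mcq_set Lam G.
        f1 a x = f1 b x \<and>
        f2 (a \<otimes>\<^bsub>G l\<^esub> b) x = f2 a x + f1 (tri b x) (tri (inv\<^bsub>G l\<^esub> a) x) * f2 b x) \<and>
     \<comment> \<open>(A3)\<close>
     (\<forall>x\<in>mcq_set Lam G. \<forall>l\<in>Lam.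
        f1 x \<one>\<^bsub>G l\<^esub> = 1 \<and>
        (\<forall>a\<in>carrier (G l). \<forall>b\<in>carrier (G l).
           f1 x (a \<otimes>\<^bsub>G l\<^esub> b) = f1 (tri x a) b * f1 x a \<and>
           f2 x (a \<otimes>\<^bsub>G l\<^esub> b) = f1 (tri x a) b * f2 x a)) \<and>
     \<comment> \<open>(A4)\<close>
     (\<forall>x\<in>mcq_set Lam G. \<forall>y\<in>mcq_set Lam G. \<forall>z\<in>mcq_set Lam G.
        f1 (tri x y) z * f1 x y = f1 (tri x z) (tri y z) * f1 x z \<and>
        f1 (tri x y) z * f2 x y = f2 (tri x z) (tri y z) * f1 y z \<and>
        f2 (tri x y) z = f1 (tri x z) (tri y z) * f2 x z + f2 (tri x z) (tri y z) * f2 y z)"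

(* phi2 is only meaningful on pairs lying in a common group; its other values are irrelevant *)
definition twisted_cocycle ::
  "'l set \<Rightarrow> ('l \<Rightarrow> 'a monoid) \<Rightarrow> ('a \<Rightarrow> 'a \<Rightarrow> 'a) \<Rightarrow> ('r::ring_1 \<Rightarrow> 'm::ab_group_add \<Rightarrow> 'm) \<Rightarrow>
   ('a \<Rightarrow> 'a \<Rightarrow> 'r) \<Rightarrow> ('a \<Rightarrow> 'a \<Rightarrow> 'r) \<Rightarrow> ('a \<Rightarrow> 'a \<Rightarrow> 'm) \<Rightarrow> ('a \<Rightarrow> 'a \<Rightarrow> 'm) \<Rightarrow> bool" where
  "twisted_cocycle Lam G tri s f1 f2 \<phi>1 \<phi>2 \<longleftrightarrow>
     \<comment> \<open>(T1)\<close>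
     (\<forall>l\<in>Lam. \<forall>a\<in>carrier (G l). \<forall>b\<in>carrier (G l). \<forall>c\<in>carrier (G l).
        \<phi>2 a b + \<phi>2 (a \<otimes>\<^bsub>G l\<^esub> b) c
          = s (f1 a (inv\<^bsub>G l\<^esub> a)) (\<phi>2 b c) + \<phi>2 a (b \<otimes>\<^bsub>G l\<^esub> c)) \<and>
     \<comment> \<open>(T2)\<close>
     (\<forall>l\<in>Lam. \<forall>a\<in>carrier (G l). \<forall>b\<in>carrier (G l).
        s (f1 b (inv\<^bsub>G l\<^esub> b)) (\<phi>1 a b) + \<phi>2 b ((inv\<^bsub>G l\<^esub> b \<otimes>\<^bsub>G l\<^esub> a) \<otimes>\<^bsub>G l\<^esub> b)
          = \<phi>2 a b) \<and>
     \<comment> \<open>(T3)\<close>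
     (\<forall>x\<in>mcq_set Lam G. \<forall>l\<in>Lam. \<forall>a\<in>carrier (G l). \<forall>b\<in>carrier (G l).
        s (f2 x (a \<otimes>\<^bsub>G l\<^esub> b)) (\<phi>2 a b) + \<phi>1 x (a \<otimes>\<^bsub>G l\<^esub> b)
          = s (f1 (tri x a) b) (\<phi>1 x a) + \<phi>1 (tri x a) b) \<and>
     \<comment> \<open>(T4)\<close>
     (\<forall>x\<in>mcq_set Lam G. \<forall>y\<in>mcq_set Lam G. \<forall>z\<in>mcq_set Lam G.
        s (f1 (tri x y) z) (\<phi>1 x y) + \<phi>1 (tri x y) z
          = s (f1 (tri x z) (tri y z)) (\<phi>1 x z) + s (f2 (tri x z) (tri y z)) (\<phi>1 y z)
            + \<phi>1 (tri x z) (tri y z)) \<and>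
     \<comment> \<open>(T5)\<close>
     (\<forall>l\<in>Lam. \<forall>a\<in>carrier (G l). \<forall>b\<in>carrier (G l). \<forall>x\<in>mcq_set Lam G.
        s (f1 (a \<otimes>\<^bsub>G l\<^esub> b) x) (\<phi>2 a b) + \<phi>1 (a \<otimes>\<^bsub>G l\<^esub> b) x
          = \<phi>1 a x + s (f1 (tri a x) (tri (inv\<^bsub>G l\<^esub> a) x)) (\<phi>1 b x)
            + \<phi>2 (tri a x) (tri b x))"

definition aug_alexander_pair ::
  "'l set \<Rightarrow> ('l \<Rightarrow> 'a monoid) \<Rightarrow> ('a \<Rightarrow> 'a \<Rightarrow> 'a) \<Rightarrow> ('r::ring_1 \<Rightarrow> 'm::ab_group_add \<Rightarrow> 'm) \<Rightarrow>
   ('a \<Rightarrow> 'a \<Rightarrow> 'r) \<Rightarrow> ('a \<Rightarrow> 'a \<Rightarrow> 'r) \<Rightarrow> ('a \<Rightarrow> 'a \<Rightarrow> 'm) \<Rightarrow> ('a \<Rightarrow> 'a \<Rightarrow> 'm) \<Rightarrow> bool" where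
  "aug_alexander_pair Lam G tri s f1 f2 \<phi>1 \<phi>2 \<longleftrightarrow>
     alexander_pair Lam G tri f1 f2 \<and> twisted_cocycle Lam G tri s f1 f2 \<phi>1 \<phi>2"

definition ext_group ::
  "('l \<Rightarrow> 'a monoid) \<Rightarrow> ('r::ring_1 \<Rightarrow> 'm::ab_group_add \<Rightarrow> 'm) \<Rightarrow> ('a \<Rightarrow> 'a \<Rightarrow> 'r) \<Rightarrow>
   ('a \<Rightarrow> 'a \<Rightarrow> 'm) \<Rightarrow> 'l \<Rightarrow> ('a \<times> 'm) \<Rightarrow> ('a \<times> 'm) monoid" where
  "ext_group G s f1 \<phi>2 l e =
     \<lparr>carrier = carrier (G l) \<times> UNIV,
      mult = (\<lambda>(a, u) (b, v). (a \<otimes>\<^bsub>G l\<^esub> b, u + s (f1 a (inv\<^bsub>G l\<^esub> a)) v + \<phi>2 a b)),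
      one = e\<rparr>"

definition ext_tri ::
  "('a \<Rightarrow> 'a \<Rightarrow> 'a) \<Rightarrow> ('r::ring_1 \<Rightarrow> 'm::ab_group_add \<Rightarrow> 'm) \<Rightarrow> ('a \<Rightarrow> 'a \<Rightarrow> 'r) \<Rightarrow>
   ('a \<Rightarrow> 'a \<Rightarrow> 'r) \<Rightarrow> ('a \<Rightarrow> 'a \<Rightarrow> 'm) \<Rightarrow> ('a \<times> 'm) \<Rightarrow> ('a \<times> 'm) \<Rightarrow> ('a \<times> 'm)" where
  "ext_tri tri s f1 f2 \<phi>1 =
     (\<lambda>(x, u) (y, v). (tri x y, s (f1 x y) u + s (f2 x y) v + \<phi>1 x y))"

end

theory Submission
  imports Defs
begin

text \<open>
  The MCQ axioms for the extension are compared componentwise. The second components are affine in the module coordinates \<open>u, v, w\<close>;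
  their linear parts follow from (A1)--(A4) and their constant parts from (T1)--(T5), once one
  observes that on pairs from a single group \<open>G\<^sub>\<lambda>\<close> these conditions pin down \<open>f\<^sub>1\<close>, \<open>f\<^sub>2\<close> and
  \<open>\<phi>\<^sub>1\<close> in terms of \<open>f\<^sub>1(a, a\<^sup>-\<^sup>1)\<close> and \<open>\<phi>\<^sub>2\<close>, which is what axiom (i) of the extension
  requires. Conversely, for \<open>M = R\<close> the second components may be evaluated at coordinates
  \<open>0\<close> and \<open>1\<close>; subtracting the evaluations separates every coefficient identity.
\<close>

lemma lmodule_simps:
  assumes "lmodule s"
  shows "s r (u + v) = s r u + s r v" "s (r + q) u = s r u + s q u"
    "s (r * q) u = s r (s q u)" "s 1 u = u"
    "s r 0 = 0" "s 0 u = 0" "s r (- u) = - s r u" "s (- r) u = - s r u"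
    "s r (u - v) = s r u - s r v" "s (r - q) u = s r u - s q u"
proof -
  have add_right: "\<And>r u v. s r (u + v) = s r u + s r v"
    and add_left: "\<And>r q u. s (r + q) u = s r u + s q u"
    using assms unfolding lmodule_def by auto
  show "s r (u + v) = s r u + s r v" "s (r + q) u = s r u + s q u"
    "s (r * q) u = s r (s q u)" "s 1 u = u" using assms unfolding lmodule_def by auto
  have zero_right: "\<And>r. s r 0 = 0" using add_right[of _ 0 0] by simp
  have zero_left: "\<And>u. s 0 u = 0" using add_left[of 0 0] by simp
  show "s r 0 = 0" "s 0 u = 0" by (fact zero_right, fact zero_left)
  have neg_right: "\<And>r u. s r (- u) = - s r u"
    by (metis add_right zero_right add.right_inverse add_eq_0_iff)
  have neg_left: "\<And>r u. s (- r) u = - s r u"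
    by (metis add_left zero_left add.right_inverse add_eq_0_iff)
  show "s r (- u) = - s r u" "s (- r) u = - s r u" by (fact neg_right, fact neg_left)
  show "s r (u - v) = s r u - s r v"
    using add_right[of r u "- v"] neg_right[of r v] by (simp only: diff_conv_add_uminus)
  show "s (r - q) u = s r u - s q u"
    using add_left[of r "- q" u] neg_left[of q u] by (simp only: diff_conv_add_uminus)
qed

lemma ext_group_carrier: "carrier (ext_group G s f1 \<phi>2 l e) = carrier (G l) \<times> UNIV"
  by (simp add: ext_group_def)

lemma ext_group_mult: "(a, u) \<otimes>\<^bsub>ext_group G s f1 \<phi>2 l e\<^esub> (b, v)
    = (a \<otimes>\<^bsub>G l\<^esub> b, u + s (f1 a (inv\<^bsub>G l\<^esub> a)) v + \<phi>2 a b)"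
  by (simp add: ext_group_def)

lemma ext_group_one: "\<one>\<^bsub>ext_group G s f1 \<phi>2 l e\<^esub> = e"
  by (simp add: ext_group_def)

lemma mcq_set_ext_group:
  "mcq_set Lam (\<lambda>l. ext_group G s f1 \<phi>2 l (e l)) = mcq_set Lam G \<times> UNIV"
  by (auto simp: mcq_set_def ext_group_carrier)

lemma ext_tri_apply:
  "ext_tri tri s f1 f2 \<phi>1 (x, u) (y, v) = (tri x y, s (f1 x y) u + s (f2 x y) v + \<phi>1 x y)"
  by (simp add: ext_tri_def)

locale multiple_conjugation_quandle =
  fixes Lam :: "'l set" and G :: "'l \<Rightarrow> 'a monoid" and tri :: "'a \<Rightarrow> 'a \<Rightarrow> 'a"
  assumes mcq: "mcq Lam G tri"
begin

abbreviation S where "S \<equiv> mcq_set Lam G"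

lemma group_G: "l \<in> Lam \<Longrightarrow> group (G l)"
  using mcq[unfolded mcq_def, THEN conjunct1] by blast

lemma group_index_unique:
  "l \<in> Lam \<Longrightarrow> m \<in> Lam \<Longrightarrow> x \<in> carrier (G l) \<Longrightarrow> x \<in> carrier (G m) \<Longrightarrow> l = m"
  using mcq[unfolded mcq_def, THEN conjunct2, THEN conjunct1] by blast

lemma in_mcq_set: "l \<in> Lam \<Longrightarrow> a \<in> carrier (G l) \<Longrightarrow> a \<in> S"
  by (auto simp: mcq_set_def)

lemma tri_closed: "x \<in> S \<Longrightarrow> y \<in> S \<Longrightarrow> tri x y \<in> S"
  using mcq[unfolded mcq_def, THEN conjunct2, THEN conjunct2, THEN conjunct1] by blast

lemma tri_group: "l \<in> Lam \<Longrightarrow> a \<in> carrier (G l) \<Longrightarrow> b \<in> carrier (G l) \<Longrightarrow>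
    tri a b = (inv\<^bsub>G l\<^esub> b \<otimes>\<^bsub>G l\<^esub> a) \<otimes>\<^bsub>G l\<^esub> b"
  using mcq[unfolded mcq_def, THEN conjunct2, THEN conjunct2, THEN conjunct2, THEN conjunct1] by blast

lemma tri_one_right: "x \<in> S \<Longrightarrow> l \<in> Lam \<Longrightarrow> tri x \<one>\<^bsub>G l\<^esub> = x"
  using mcq[unfolded mcq_def, THEN conjunct2, THEN conjunct2, THEN conjunct2, THEN conjunct2, THEN conjunct1] by blast

lemma tri_mult_right: "x \<in> S \<Longrightarrow> l \<in> Lam \<Longrightarrow> a \<in> carrier (G l) \<Longrightarrow> b \<in> carrier (G l) \<Longrightarrow>
    tri x (a \<otimes>\<^bsub>G l\<^esub> b) = tri (tri x a) b"
  using mcq[unfolded mcq_def, THEN conjunct2, THEN conjunct2, THEN conjunct2, THEN conjunct2, THEN conjunct1] by blast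

lemma tri_self_distrib: "x \<in> S \<Longrightarrow> y \<in> S \<Longrightarrow> z \<in> S \<Longrightarrow>
    tri (tri x y) z = tri (tri x z) (tri y z)"
  using mcq[unfolded mcq_def, THEN conjunct2, THEN conjunct2, THEN conjunct2, THEN conjunct2, THEN conjunct2, THEN conjunct1] by blast

lemma tri_mult_left: "x \<in> S \<Longrightarrow> l \<in> Lam \<Longrightarrow> a \<in> carrier (G l) \<Longrightarrow> b \<in> carrier (G l) \<Longrightarrow>
    \<exists>m\<in>Lam. tri a x \<in> carrier (G m) \<and> tri b x \<in> carrier (G m) \<and>
      tri (a \<otimes>\<^bsub>G l\<^esub> b) x = tri a x \<otimes>\<^bsub>G m\<^esub> tri b x"
  using mcq[unfolded mcq_def, THEN conjunct2, THEN conjunct2, THEN conjunct2, THEN conjunct2, THEN conjunct2, THEN conjunct2] by blast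

lemma tri_idem: "l \<in> Lam \<Longrightarrow> a \<in> carrier (G l) \<Longrightarrow> tri a a = a"
  using tri_group[of l a a] group_G[of l] by (simp add: group.l_inv group.is_monoid monoid.l_one)

lemma tri_one_left: "l \<in> Lam \<Longrightarrow> a \<in> carrier (G l) \<Longrightarrow> tri \<one>\<^bsub>G l\<^esub> a = \<one>\<^bsub>G l\<^esub>"
  using tri_group[of l "\<one>\<^bsub>G l\<^esub>" a] group_G[of l]
  by (simp add: group.l_inv monoid.r_one group.is_monoid)

lemma tri_group_closed:
  "l \<in> Lam \<Longrightarrow> a \<in> carrier (G l) \<Longrightarrow> b \<in> carrier (G l) \<Longrightarrow> tri a b \<in> carrier (G l)"
  using tri_group[of l a b] group_G[of l]
  by (simp add: group.is_monoid monoid.m_closed group.inv_closed)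

lemma tri_inv_left:
  assumes l: "l \<in> Lam" and a: "a \<in> carrier (G l)" and x: "x \<in> S" and m: "m \<in> Lam"
    and am: "tri a x \<in> carrier (G m)"
  shows "tri (inv\<^bsub>G l\<^esub> a) x \<in> carrier (G m)" "inv\<^bsub>G m\<^esub> (tri a x) = tri (inv\<^bsub>G l\<^esub> a) x"
proof -
  interpret Gl: group "G l" using group_G l .
  interpret Gm: group "G m" using group_G m .
  obtain m' where m': "m' \<in> Lam" "tri a x \<in> carrier (G m')" "tri (inv\<^bsub>G l\<^esub> a) x \<in> carrier (G m')"
     "tri \<one>\<^bsub>G l\<^esub> x = tri a x \<otimes>\<^bsub>G m'\<^esub> tri (inv\<^bsub>G l\<^esub> a) x"
    using tri_mult_left[OF x l a Gl.inv_closed[OF a]] a by auto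
  have "m' = m" using group_index_unique[OF m'(1) m m'(2) am] .
  obtain k where k: "k \<in> Lam" "tri \<one>\<^bsub>G l\<^esub> x \<in> carrier (G k)"
     "tri \<one>\<^bsub>G l\<^esub> x = tri \<one>\<^bsub>G l\<^esub> x \<otimes>\<^bsub>G k\<^esub> tri \<one>\<^bsub>G l\<^esub> x"
    using tri_mult_left[OF x l Gl.one_closed Gl.one_closed] by auto
  interpret Gk: group "G k" using group_G k(1) .
  \<comment> \<open>the image of the unit is idempotent, hence the unit of its group\<close>
  have unit: "tri \<one>\<^bsub>G l\<^esub> x = \<one>\<^bsub>G k\<^esub>" using k(2,3) by simp
  have "tri \<one>\<^bsub>G l\<^esub> x \<in> carrier (G m)" using m'(4) am m'(3) \<open>m' = m\<close> by simp
  then have "k = m" using group_index_unique[OF k(1) m k(2)] by simp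
  then have "tri a x \<otimes>\<^bsub>G m\<^esub> tri (inv\<^bsub>G l\<^esub> a) x = \<one>\<^bsub>G m\<^esub>" using m'(4) unit \<open>m' = m\<close> by simp
  then have "tri (inv\<^bsub>G l\<^esub> a) x \<otimes>\<^bsub>G m\<^esub> tri a x = \<one>\<^bsub>G m\<^esub>"
    using Gm.inv_comm am m'(3) \<open>m' = m\<close> by blast
  then show "tri (inv\<^bsub>G l\<^esub> a) x \<in> carrier (G m)" "inv\<^bsub>G m\<^esub> (tri a x) = tri (inv\<^bsub>G l\<^esub> a) x"
    using Gm.inv_equality am m'(3) \<open>m' = m\<close> by auto
qed

end

locale mcq_alexander_pair = multiple_conjugation_quandle +
  fixes f1 f2
  assumes alexander_pair: "alexander_pair Lam G tri f1 f2"
begin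

lemma f1_plus_f2: "l \<in> Lam \<Longrightarrow> a \<in> carrier (G l) \<Longrightarrow> b \<in> carrier (G l) \<Longrightarrow>
    f1 a b + f2 a b = f1 a (inv\<^bsub>G l\<^esub> a \<otimes>\<^bsub>G l\<^esub> b)"
  using alexander_pair[unfolded alexander_pair_def, THEN conjunct1] by blast

lemma f1_left_const:
  "l \<in> Lam \<Longrightarrow> a \<in> carrier (G l) \<Longrightarrow> b \<in> carrier (G l) \<Longrightarrow> x \<in> S \<Longrightarrow> f1 a x = f1 b x"
  using alexander_pair[unfolded alexander_pair_def, THEN conjunct2, THEN conjunct1] by blast

lemma f2_mult_left: "l \<in> Lam \<Longrightarrow> a \<in> carrier (G l) \<Longrightarrow> b \<in> carrier (G l) \<Longrightarrow> x \<in> S \<Longrightarrow>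
    f2 (a \<otimes>\<^bsub>G l\<^esub> b) x = f2 a x + f1 (tri b x) (tri (inv\<^bsub>G l\<^esub> a) x) * f2 b x"
  using alexander_pair[unfolded alexander_pair_def, THEN conjunct2, THEN conjunct1] by blast

lemma f1_one_right: "x \<in> S \<Longrightarrow> l \<in> Lam \<Longrightarrow> f1 x \<one>\<^bsub>G l\<^esub> = 1"
  using alexander_pair[unfolded alexander_pair_def, THEN conjunct2, THEN conjunct2, THEN conjunct1]
  by blast

lemma f1_mult_right: "x \<in> S \<Longrightarrow> l \<in> Lam \<Longrightarrow> a \<in> carrier (G l) \<Longrightarrow> b \<in> carrier (G l) \<Longrightarrow>
    f1 x (a \<otimes>\<^bsub>G l\<^esub> b) = f1 (tri x a) b * f1 x a"
  using alexander_pair[unfolded alexander_pair_def, THEN conjunct2, THEN conjunct2, THEN conjunct1]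
  by blast

lemma f2_mult_right: "x \<in> S \<Longrightarrow> l \<in> Lam \<Longrightarrow> a \<in> carrier (G l) \<Longrightarrow> b \<in> carrier (G l) \<Longrightarrow>
    f2 x (a \<otimes>\<^bsub>G l\<^esub> b) = f1 (tri x a) b * f2 x a"
  using alexander_pair[unfolded alexander_pair_def, THEN conjunct2, THEN conjunct2, THEN conjunct1]
  by blast

lemma f_self_distrib: "x \<in> S \<Longrightarrow> y \<in> S \<Longrightarrow> z \<in> S \<Longrightarrow>
    f1 (tri x y) z * f1 x y = f1 (tri x z) (tri y z) * f1 x z \<and>
    f1 (tri x y) z * f2 x y = f2 (tri x z) (tri y z) * f1 y z \<and>
    f2 (tri x y) z = f1 (tri x z) (tri y z) * f2 x z + f2 (tri x z) (tri y z) * f2 y z"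
  using alexander_pair[unfolded alexander_pair_def, THEN conjunct2, THEN conjunct2, THEN conjunct2]
  by blast

lemma f1_left_one: "l \<in> Lam \<Longrightarrow> a \<in> carrier (G l) \<Longrightarrow> x \<in> S \<Longrightarrow> f1 a x = f1 \<one>\<^bsub>G l\<^esub> x"
  using f1_left_const group_G group.is_monoid monoid.one_closed by metis

lemma f1_group: "l \<in> Lam \<Longrightarrow> a \<in> carrier (G l) \<Longrightarrow> b \<in> carrier (G l) \<Longrightarrow> f1 a b = f1 b b"
  using f1_left_const in_mcq_set by blast

lemma f1_inv_mult:
  assumes l: "l \<in> Lam" and a: "a \<in> carrier (G l)" and b: "b \<in> carrier (G l)"
  shows "f1 (a \<otimes>\<^bsub>G l\<^esub> b) (inv\<^bsub>G l\<^esub> (a \<otimes>\<^bsub>G l\<^esub> b))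
     = f1 a (inv\<^bsub>G l\<^esub> a) * f1 b (inv\<^bsub>G l\<^esub> b)"
proof -
  interpret g: group "G l" using group_G l .
  have one: "\<one>\<^bsub>G l\<^esub> \<in> S" using in_mcq_set l by simp
  have "f1 (a \<otimes>\<^bsub>G l\<^esub> b) (inv\<^bsub>G l\<^esub> (a \<otimes>\<^bsub>G l\<^esub> b)) = f1 \<one>\<^bsub>G l\<^esub> (inv\<^bsub>G l\<^esub> b \<otimes>\<^bsub>G l\<^esub> inv\<^bsub>G l\<^esub> a)"
    using f1_left_one[OF l g.m_closed[OF a b] in_mcq_set[OF l g.inv_closed[OF g.m_closed[OF a b]]]]
      a b by (simp add: g.inv_mult_group)
  also have "\<dots> = f1 \<one>\<^bsub>G l\<^esub> (inv\<^bsub>G l\<^esub> a) * f1 \<one>\<^bsub>G l\<^esub> (inv\<^bsub>G l\<^esub> b)"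
    using f1_mult_right[OF one l, of "inv\<^bsub>G l\<^esub> b" "inv\<^bsub>G l\<^esub> a"] tri_one_left[OF l] a b by simp
  also have "\<dots> = f1 a (inv\<^bsub>G l\<^esub> a) * f1 b (inv\<^bsub>G l\<^esub> b)"
    using f1_left_one[OF l a in_mcq_set[OF l g.inv_closed[OF a]]]
      f1_left_one[OF l b in_mcq_set[OF l g.inv_closed[OF b]]] by simp
  finally show ?thesis .
qed

lemma f1_inv_inverse:
  assumes l: "l \<in> Lam" and a: "a \<in> carrier (G l)"
  shows "f1 a a * f1 a (inv\<^bsub>G l\<^esub> a) = 1" "f1 a (inv\<^bsub>G l\<^esub> a) * f1 a a = 1"
proof -
  interpret g: group "G l" using group_G l .
  have one: "\<one>\<^bsub>G l\<^esub> \<in> S" using in_mcq_set l by simp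
  have left_one: "f1 a (inv\<^bsub>G l\<^esub> a) = f1 \<one>\<^bsub>G l\<^esub> (inv\<^bsub>G l\<^esub> a)" "f1 a a = f1 \<one>\<^bsub>G l\<^esub> a"
    using f1_left_one[OF l a in_mcq_set[OF l g.inv_closed[OF a]]]
      f1_left_one[OF l a in_mcq_set[OF l a]] by auto
  have "1 = f1 \<one>\<^bsub>G l\<^esub> (a \<otimes>\<^bsub>G l\<^esub> inv\<^bsub>G l\<^esub> a)" using f1_one_right[OF one l] a by simp
  also have "\<dots> = f1 \<one>\<^bsub>G l\<^esub> (inv\<^bsub>G l\<^esub> a) * f1 \<one>\<^bsub>G l\<^esub> a"
    using f1_mult_right[OF one l a, of "inv\<^bsub>G l\<^esub> a"] tri_one_left[OF l a] a by simp
  finally show "f1 a (inv\<^bsub>G l\<^esub> a) * f1 a a = 1" using left_one by simp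
  have "1 = f1 \<one>\<^bsub>G l\<^esub> (inv\<^bsub>G l\<^esub> a \<otimes>\<^bsub>G l\<^esub> a)" using f1_one_right[OF one l] a by simp
  also have "\<dots> = f1 \<one>\<^bsub>G l\<^esub> a * f1 \<one>\<^bsub>G l\<^esub> (inv\<^bsub>G l\<^esub> a)"
    using f1_mult_right[OF one l _ a, of "inv\<^bsub>G l\<^esub> a"] tri_one_left[OF l, of "inv\<^bsub>G l\<^esub> a"] a
    by simp
  finally show "f1 a a * f1 a (inv\<^bsub>G l\<^esub> a) = 1" using left_one by simp
qed

lemma f1_inv_inv:
  "l \<in> Lam \<Longrightarrow> a \<in> carrier (G l) \<Longrightarrow> f1 (inv\<^bsub>G l\<^esub> a) (inv\<^bsub>G l\<^esub> (inv\<^bsub>G l\<^esub> a)) = f1 a a"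
  using f1_left_const[of l "inv\<^bsub>G l\<^esub> a" a a] group_G[of l] in_mcq_set
  by (simp add: group.inv_closed group.inv_inv)

lemma f2_group:
  assumes l: "l \<in> Lam" and a: "a \<in> carrier (G l)" and b: "b \<in> carrier (G l)"
  shows "f2 a b = f1 b b * f1 a (inv\<^bsub>G l\<^esub> a) - f1 b b"
proof -
  interpret g: group "G l" using group_G l .
  have one: "\<one>\<^bsub>G l\<^esub> \<in> S" using in_mcq_set l by simp
  have "f1 a (inv\<^bsub>G l\<^esub> a \<otimes>\<^bsub>G l\<^esub> b) = f1 \<one>\<^bsub>G l\<^esub> (inv\<^bsub>G l\<^esub> a \<otimes>\<^bsub>G l\<^esub> b)"
    using f1_left_one[OF l a in_mcq_set[OF l g.m_closed[OF g.inv_closed[OF a] b]]] .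
  also have "\<dots> = f1 \<one>\<^bsub>G l\<^esub> b * f1 \<one>\<^bsub>G l\<^esub> (inv\<^bsub>G l\<^esub> a)"
    using f1_mult_right[OF one l _ b, of "inv\<^bsub>G l\<^esub> a"] tri_one_left[OF l, of "inv\<^bsub>G l\<^esub> a"] a
    by simp
  also have "\<dots> = f1 b b * f1 a (inv\<^bsub>G l\<^esub> a)"
    using f1_left_one[OF l a in_mcq_set[OF l g.inv_closed[OF a]]]
      f1_left_one[OF l b in_mcq_set[OF l b]] by simp
  finally show ?thesis using f1_plus_f2[OF l a b] f1_group[OF l a b] by (simp add: algebra_simps)
qed

lemma f2_mult_right_shift:
  assumes x: "x \<in> S" and l: "l \<in> Lam" and a: "a \<in> carrier (G l)" and b: "b \<in> carrier (G l)"
  shows "f2 x (a \<otimes>\<^bsub>G l\<^esub> b) * f1 a (inv\<^bsub>G l\<^esub> a) = f2 (tri x a) b"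
proof -
  interpret g: group "G l" using group_G l .
  define y where "y = tri x a"
  have y: "y \<in> S" using y_def tri_closed x in_mcq_set l a by simp
  have "f1 y a * f2 x a = f2 y a * f1 a a"
    using f_self_distrib[OF x in_mcq_set[OF l a] in_mcq_set[OF l a]] tri_idem[OF l a] y_def by simp
  also have "f2 y a = f1 y a * f2 y \<one>\<^bsub>G l\<^esub>"
    using f2_mult_right[OF y l g.one_closed a] tri_one_right[OF y l] a by simp
  finally have "f1 y a * f2 x a = f1 y a * (f2 y \<one>\<^bsub>G l\<^esub> * f1 a a)" by (simp add: mult.assoc)
  moreover have "f1 (tri y a) (inv\<^bsub>G l\<^esub> a) * f1 y a = 1"
    using f1_mult_right[OF y l a g.inv_closed[OF a]] f1_one_right[OF y l] a by simp
  ultimately have "f2 x a = f2 y \<one>\<^bsub>G l\<^esub> * f1 a a"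
    by (metis mult.assoc mult_1)
  then have "f2 x a * f1 a (inv\<^bsub>G l\<^esub> a) = f2 y \<one>\<^bsub>G l\<^esub>"
    using f1_inv_inverse(1)[OF l a] by (simp add: mult.assoc)
  then have "f2 x (a \<otimes>\<^bsub>G l\<^esub> b) * f1 a (inv\<^bsub>G l\<^esub> a) = f1 y b * f2 y \<one>\<^bsub>G l\<^esub>"
    using f2_mult_right[OF x l a b] y_def by (simp add: mult.assoc)
  also have "\<dots> = f2 y b"
    using f2_mult_right[OF y l g.one_closed b] tri_one_right[OF y l] b by simp
  finally show ?thesis using y_def by simp
qed

lemma f1_mult_left:
  assumes l: "l \<in> Lam" and a: "a \<in> carrier (G l)" and b: "b \<in> carrier (G l)" and x: "x \<in> S"
  shows "f1 (a \<otimes>\<^bsub>G l\<^esub> b) x * f1 a (inv\<^bsub>G l\<^esub> a)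
    = f1 (tri a x) (tri (inv\<^bsub>G l\<^esub> a) x) * f1 b x"
proof -
  interpret g: group "G l" using group_G l .
  have "f1 (tri a (inv\<^bsub>G l\<^esub> a)) x * f1 a (inv\<^bsub>G l\<^esub> a)
      = f1 (tri a x) (tri (inv\<^bsub>G l\<^esub> a) x) * f1 a x"
    using f_self_distrib[OF in_mcq_set[OF l a] in_mcq_set[OF l g.inv_closed[OF a]] x] by simp
  moreover have "f1 (tri a (inv\<^bsub>G l\<^esub> a)) x = f1 (a \<otimes>\<^bsub>G l\<^esub> b) x"
    using f1_left_const[OF l tri_group_closed[OF l a g.inv_closed[OF a]] g.m_closed[OF a b] x] .
  moreover have "f1 a x = f1 b x" using f1_left_const[OF l a b x] .
  ultimately show ?thesis by simp
qed

end

locale augmented_mcq_alexander_pair = mcq_alexander_pair +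
  fixes s \<phi>1 \<phi>2
  assumes lmodule: "lmodule s"
    and twisted_cocycle: "twisted_cocycle Lam G tri s f1 f2 \<phi>1 \<phi>2"
begin

lemmas s_simps = lmodule_simps[OF lmodule]

lemma phi2_cocycle:
  "l \<in> Lam \<Longrightarrow> a \<in> carrier (G l) \<Longrightarrow> b \<in> carrier (G l) \<Longrightarrow> c \<in> carrier (G l) \<Longrightarrow>
    \<phi>2 a b + \<phi>2 (a \<otimes>\<^bsub>G l\<^esub> b) c = s (f1 a (inv\<^bsub>G l\<^esub> a)) (\<phi>2 b c) + \<phi>2 a (b \<otimes>\<^bsub>G l\<^esub> c)"
  using twisted_cocycle[unfolded twisted_cocycle_def, THEN conjunct1] by blast

lemma phi1_phi2_group: "l \<in> Lam \<Longrightarrow> a \<in> carrier (G l) \<Longrightarrow> b \<in> carrier (G l) \<Longrightarrow>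
    s (f1 b (inv\<^bsub>G l\<^esub> b)) (\<phi>1 a b) + \<phi>2 b ((inv\<^bsub>G l\<^esub> b \<otimes>\<^bsub>G l\<^esub> a) \<otimes>\<^bsub>G l\<^esub> b) = \<phi>2 a b"
  using twisted_cocycle[unfolded twisted_cocycle_def, THEN conjunct2, THEN conjunct1] by blast

lemma phi1_mult_right: "x \<in> S \<Longrightarrow> l \<in> Lam \<Longrightarrow> a \<in> carrier (G l) \<Longrightarrow> b \<in> carrier (G l) \<Longrightarrow>
    s (f2 x (a \<otimes>\<^bsub>G l\<^esub> b)) (\<phi>2 a b) + \<phi>1 x (a \<otimes>\<^bsub>G l\<^esub> b)
      = s (f1 (tri x a) b) (\<phi>1 x a) + \<phi>1 (tri x a) b"
  using twisted_cocycle[unfolded twisted_cocycle_def, THEN conjunct2, THEN conjunct2, THEN conjunct1]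
  by blast

lemma phi1_self_distrib: "x \<in> S \<Longrightarrow> y \<in> S \<Longrightarrow> z \<in> S \<Longrightarrow>
    s (f1 (tri x y) z) (\<phi>1 x y) + \<phi>1 (tri x y) z
      = s (f1 (tri x z) (tri y z)) (\<phi>1 x z) + s (f2 (tri x z) (tri y z)) (\<phi>1 y z)
        + \<phi>1 (tri x z) (tri y z)"
  using twisted_cocycle[unfolded twisted_cocycle_def,
      THEN conjunct2, THEN conjunct2, THEN conjunct2, THEN conjunct1]
  by blast

lemma phi1_mult_left: "l \<in> Lam \<Longrightarrow> a \<in> carrier (G l) \<Longrightarrow> b \<in> carrier (G l) \<Longrightarrow> x \<in> S \<Longrightarrow>
    s (f1 (a \<otimes>\<^bsub>G l\<^esub> b) x) (\<phi>2 a b) + \<phi>1 (a \<otimes>\<^bsub>G l\<^esub> b) x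
      = \<phi>1 a x + s (f1 (tri a x) (tri (inv\<^bsub>G l\<^esub> a) x)) (\<phi>1 b x) + \<phi>2 (tri a x) (tri b x)"
  using twisted_cocycle[unfolded twisted_cocycle_def,
      THEN conjunct2, THEN conjunct2, THEN conjunct2, THEN conjunct2]
  by blast

lemma phi2_one_left: "l \<in> Lam \<Longrightarrow> c \<in> carrier (G l) \<Longrightarrow> \<phi>2 \<one>\<^bsub>G l\<^esub> c = \<phi>2 \<one>\<^bsub>G l\<^esub> \<one>\<^bsub>G l\<^esub>"
  using phi2_cocycle[of l "\<one>\<^bsub>G l\<^esub>" "\<one>\<^bsub>G l\<^esub>" c] f1_one_right[OF in_mcq_set, of l "\<one>\<^bsub>G l\<^esub>" l]
    group_G[of l]
  by (simp add: group.is_monoid monoid.l_one monoid.inv_one s_simps)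

lemma phi1_group:
  assumes l: "l \<in> Lam" and a: "a \<in> carrier (G l)" and b: "b \<in> carrier (G l)"
  shows "\<phi>1 a b = \<phi>2 (inv\<^bsub>G l\<^esub> b) a + \<phi>2 (inv\<^bsub>G l\<^esub> b \<otimes>\<^bsub>G l\<^esub> a) b
           - \<phi>2 (inv\<^bsub>G l\<^esub> b) b - \<phi>2 \<one>\<^bsub>G l\<^esub> \<one>\<^bsub>G l\<^esub>"
proof -
  interpret g: group "G l" using group_G l .
  define bi where "bi = inv\<^bsub>G l\<^esub> b"
  define c where "c = (bi \<otimes>\<^bsub>G l\<^esub> a) \<otimes>\<^bsub>G l\<^esub> b"
  have bi: "bi \<in> carrier (G l)" using b bi_def by simp
  have c: "c \<in> carrier (G l)" using a b bi c_def by simp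
  have bc: "b \<otimes>\<^bsub>G l\<^esub> c = a \<otimes>\<^bsub>G l\<^esub> b"
    using a b bi unfolding c_def bi_def by (simp add: g.m_assoc[symmetric])
  have f1_bi: "f1 bi (inv\<^bsub>G l\<^esub> bi) = f1 b b" using f1_inv_inv[OF l b] bi_def by simp
  have phi1: "s (f1 b (inv\<^bsub>G l\<^esub> b)) (\<phi>1 a b) = \<phi>2 a b - \<phi>2 b c"
    using phi1_phi2_group[OF l a b] c_def bi_def by (simp add: eq_diff_eq)
  have cocycle_bi_a_b:
    "s (f1 b b) (\<phi>2 a b) = \<phi>2 bi a + \<phi>2 (bi \<otimes>\<^bsub>G l\<^esub> a) b - \<phi>2 bi (a \<otimes>\<^bsub>G l\<^esub> b)"
    using phi2_cocycle[OF l bi a b] f1_bi by (simp add: eq_diff_eq)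
  have cocycle_bi_b_c:
    "s (f1 b b) (\<phi>2 b c) = \<phi>2 bi b + \<phi>2 \<one>\<^bsub>G l\<^esub> \<one>\<^bsub>G l\<^esub> - \<phi>2 bi (a \<otimes>\<^bsub>G l\<^esub> b)"
    using phi2_cocycle[OF l bi b c] f1_bi bc phi2_one_left[OF l c] bi_def b by (simp add: eq_diff_eq)
  have "\<phi>1 a b = s (f1 b b * f1 b (inv\<^bsub>G l\<^esub> b)) (\<phi>1 a b)"
    using f1_inv_inverse(1)[OF l b] s_simps by simp
  also have "\<dots> = s (f1 b b) (\<phi>2 a b) - s (f1 b b) (\<phi>2 b c)"
    by (simp only: s_simps(3,9) phi1)
  also have "\<dots> = (\<phi>2 bi a + \<phi>2 (bi \<otimes>\<^bsub>G l\<^esub> a) b - \<phi>2 bi (a \<otimes>\<^bsub>G l\<^esub> b))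
      - (\<phi>2 bi b + \<phi>2 \<one>\<^bsub>G l\<^esub> \<one>\<^bsub>G l\<^esub> - \<phi>2 bi (a \<otimes>\<^bsub>G l\<^esub> b))"
    by (simp only: cocycle_bi_a_b cocycle_bi_b_c)
  finally show ?thesis unfolding bi_def by (simp add: algebra_simps)
qed

lemma phi1_one_right:
  "x \<in> S \<Longrightarrow> l \<in> Lam \<Longrightarrow> \<phi>1 x \<one>\<^bsub>G l\<^esub> = s (f2 x \<one>\<^bsub>G l\<^esub>) (\<phi>2 \<one>\<^bsub>G l\<^esub> \<one>\<^bsub>G l\<^esub>)"
  using phi1_mult_right[of x l "\<one>\<^bsub>G l\<^esub>" "\<one>\<^bsub>G l\<^esub>"] f1_one_right[of x l] tri_one_right[of x l]
    group_G[of l]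
  by (simp add: group.is_monoid monoid.l_one s_simps)

abbreviation EG where "EG l \<equiv> ext_group G s f1 \<phi>2 l (\<one>\<^bsub>G l\<^esub>, - \<phi>2 \<one>\<^bsub>G l\<^esub> \<one>\<^bsub>G l\<^esub>)"
abbreviation ET where "ET \<equiv> ext_tri tri s f1 f2 \<phi>1"

lemma EG_l_inv:
  "l \<in> Lam \<Longrightarrow> a \<in> carrier (G l) \<Longrightarrow>
    (inv\<^bsub>G l\<^esub> a, - s (f1 a a) u - \<phi>2 (inv\<^bsub>G l\<^esub> a) a - \<phi>2 \<one>\<^bsub>G l\<^esub> \<one>\<^bsub>G l\<^esub>) \<otimes>\<^bsub>EG l\<^esub> (a, u)
      = \<one>\<^bsub>EG l\<^esub>"
  using f1_inv_inv[of l a] group_G[of l] by (simp add: ext_group_mult ext_group_one group.l_inv)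

lemma group_EG:
  assumes l: "l \<in> Lam"
  shows "group (EG l)"
proof -
  interpret g: group "G l" using group_G l .
  have f1_one: "f1 \<one>\<^bsub>G l\<^esub> (inv\<^bsub>G l\<^esub> \<one>\<^bsub>G l\<^esub>) = 1"
    using f1_one_right[OF in_mcq_set[OF l g.one_closed] l] by simp
  show ?thesis
  proof (rule groupI)
    show "x \<otimes>\<^bsub>EG l\<^esub> y \<in> carrier (EG l)" if "x \<in> carrier (EG l)" "y \<in> carrier (EG l)" for x y
      using that by (cases x, cases y) (simp add: ext_group_mult ext_group_carrier)
    show "\<one>\<^bsub>EG l\<^esub> \<in> carrier (EG l)" by (simp add: ext_group_one ext_group_carrier)
    show "x \<otimes>\<^bsub>EG l\<^esub> y \<otimes>\<^bsub>EG l\<^esub> z = x \<otimes>\<^bsub>EG l\<^esub> (y \<otimes>\<^bsub>EG l\<^esub> z)"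
      if "x \<in> carrier (EG l)" "y \<in> carrier (EG l)" "z \<in> carrier (EG l)" for x y z
    proof -
      have "((a, u) \<otimes>\<^bsub>EG l\<^esub> (b, v)) \<otimes>\<^bsub>EG l\<^esub> (c, w)
          = (a, u) \<otimes>\<^bsub>EG l\<^esub> ((b, v) \<otimes>\<^bsub>EG l\<^esub> (c, w))"
        if "a \<in> carrier (G l)" "b \<in> carrier (G l)" "c \<in> carrier (G l)" for a b c u v w
        using phi2_cocycle[OF l that] f1_inv_mult[OF l that(1,2)] that
        by (simp add: ext_group_mult g.m_assoc s_simps algebra_simps)
      then show ?thesis using that by (cases x, cases y, cases z) (simp add: ext_group_carrier)
    qed
    show "\<one>\<^bsub>EG l\<^esub> \<otimes>\<^bsub>EG l\<^esub> x = x" if "x \<in> carrier (EG l)" for x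
      proof -
      have "\<one>\<^bsub>EG l\<^esub> \<otimes>\<^bsub>EG l\<^esub> (b, v) = (b, v)" if "b \<in> carrier (G l)" for b v
        using that phi2_one_left[OF l that] f1_one by (simp add: ext_group_mult ext_group_one s_simps)
      then show ?thesis using that by (cases x) (simp add: ext_group_carrier)
    qed
    show "\<exists>y\<in>carrier (EG l). y \<otimes>\<^bsub>EG l\<^esub> x = \<one>\<^bsub>EG l\<^esub>" if "x \<in> carrier (EG l)" for x
      using that EG_l_inv[OF l] by (cases x) (force simp: ext_group_carrier)
  qed
qed

lemma EG_inv: "l \<in> Lam \<Longrightarrow> a \<in> carrier (G l) \<Longrightarrow>
    inv\<^bsub>EG l\<^esub> (a, u) = (inv\<^bsub>G l\<^esub> a, - s (f1 a a) u - \<phi>2 (inv\<^bsub>G l\<^esub> a) a - \<phi>2 \<one>\<^bsub>G l\<^esub> \<one>\<^bsub>G l\<^esub>)"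
  using group.inv_equality[OF group_EG EG_l_inv] group_G[of l]
  by (simp add: ext_group_carrier group.inv_closed)

lemma ET_group:
  assumes l: "l \<in> Lam" and a: "a \<in> carrier (G l)" and b: "b \<in> carrier (G l)"
  shows "ET (a, u) (b, v) = (inv\<^bsub>EG l\<^esub> (b, v) \<otimes>\<^bsub>EG l\<^esub> (a, u)) \<otimes>\<^bsub>EG l\<^esub> (b, v)"
proof -
  interpret g: group "G l" using group_G l .
  have bi: "inv\<^bsub>G l\<^esub> b \<in> carrier (G l)" using b by simp
  have f1_bi: "f1 (inv\<^bsub>G l\<^esub> b) b = f1 b b" using f1_inv_inv[OF l b] b by simp
  have f1_bi_a: "f1 (inv\<^bsub>G l\<^esub> b \<otimes>\<^bsub>G l\<^esub> a) (inv\<^bsub>G l\<^esub> (inv\<^bsub>G l\<^esub> b \<otimes>\<^bsub>G l\<^esub> a))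
      = f1 b b * f1 a (inv\<^bsub>G l\<^esub> a)"
    using f1_inv_mult[OF l bi a] f1_inv_inv[OF l b] by simp
  have f2_ab: "s (f2 a b) v = s (f1 b b) (s (f1 a (inv\<^bsub>G l\<^esub> a)) v) - s (f1 b b) v"
    using f2_group[OF l a b] by (simp add: s_simps)
  show ?thesis
    using EG_inv[OF l b] f1_group[OF l a b] tri_group[OF l a b] f1_bi f1_bi_a b
    by (simp add: ext_tri_apply ext_group_mult s_simps) (simp add: f2_ab phi1_group[OF l a b] algebra_simps)
qed

lemma ET_one_right: "x \<in> S \<Longrightarrow> l \<in> Lam \<Longrightarrow> ET (x, w) \<one>\<^bsub>EG l\<^esub> = (x, w)"
  using tri_one_right[of x l] f1_one_right[of x l] phi1_one_right[of x l]
  by (simp add: ext_group_one ext_tri_apply s_simps)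

lemma ET_mult_right:
  assumes x: "x \<in> S" and l: "l \<in> Lam" and a: "a \<in> carrier (G l)" and b: "b \<in> carrier (G l)"
  shows "ET (x, w) ((a, u) \<otimes>\<^bsub>EG l\<^esub> (b, v)) = ET (ET (x, w) (a, u)) (b, v)"
proof -
  have "s (f2 x (a \<otimes>\<^bsub>G l\<^esub> b)) (s (f1 a (inv\<^bsub>G l\<^esub> a)) v) = s (f2 (tri x a) b) v"
    using f2_mult_right_shift[OF x l a b] by (simp flip: s_simps(3))
  moreover have "\<phi>1 x (a \<otimes>\<^bsub>G l\<^esub> b) = s (f1 (tri x a) b) (\<phi>1 x a) + \<phi>1 (tri x a) b
      - s (f2 x (a \<otimes>\<^bsub>G l\<^esub> b)) (\<phi>2 a b)"
    using phi1_mult_right[OF x l a b] by (simp add: algebra_simps eq_diff_eq)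
  moreover have "s (f2 x (a \<otimes>\<^bsub>G l\<^esub> b)) u = s (f1 (tri x a) b) (s (f2 x a) u)"
    using f2_mult_right[OF x l a b] by (simp add: s_simps)
  moreover have "s (f1 x (a \<otimes>\<^bsub>G l\<^esub> b)) w = s (f1 (tri x a) b) (s (f1 x a) w)"
    using f1_mult_right[OF x l a b] by (simp add: s_simps)
  ultimately show ?thesis
    using tri_mult_right[OF x l a b] by (simp add: ext_tri_apply ext_group_mult s_simps(1) algebra_simps)
qed

lemma ET_self_distrib:
  assumes x: "x \<in> S" and y: "y \<in> S" and z: "z \<in> S"
  shows "ET (ET (x, u) (y, v)) (z, w) = ET (ET (x, u) (z, w)) (ET (y, v) (z, w))"
proof -
  note f = f_self_distrib[OF x y z]
  have "s (f1 (tri x y) z) (s (f1 x y) u) = s (f1 (tri x z) (tri y z)) (s (f1 x z) u)"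
    using f by (simp flip: s_simps(3))
  moreover have "s (f1 (tri x y) z) (s (f2 x y) v) = s (f2 (tri x z) (tri y z)) (s (f1 y z) v)"
    using f by (simp flip: s_simps(3))
  moreover have "s (f2 (tri x y) z) w = s (f1 (tri x z) (tri y z)) (s (f2 x z) w)
       + s (f2 (tri x z) (tri y z)) (s (f2 y z) w)"
    using f by (simp add: s_simps)
  moreover have "\<phi>1 (tri x y) z = s (f1 (tri x z) (tri y z)) (\<phi>1 x z)
      + s (f2 (tri x z) (tri y z)) (\<phi>1 y z) + \<phi>1 (tri x z) (tri y z) - s (f1 (tri x y) z) (\<phi>1 x y)"
    using phi1_self_distrib[OF x y z] by (simp add: algebra_simps eq_diff_eq)
  ultimately show ?thesis
    using tri_self_distrib[OF x y z] by (simp add: ext_tri_apply s_simps(1) algebra_simps)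
qed

lemma ET_mult_left:
  assumes x: "x \<in> S" and l: "l \<in> Lam" and a: "a \<in> carrier (G l)" and b: "b \<in> carrier (G l)"
  shows "\<exists>m\<in>Lam. ET (a, u) (x, w) \<in> carrier (EG m) \<and> ET (b, v) (x, w) \<in> carrier (EG m) \<and>
    ET ((a, u) \<otimes>\<^bsub>EG l\<^esub> (b, v)) (x, w) = ET (a, u) (x, w) \<otimes>\<^bsub>EG m\<^esub> ET (b, v) (x, w)"
proof -
  interpret g: group "G l" using group_G l .
  obtain m where m: "m \<in> Lam" "tri a x \<in> carrier (G m)" "tri b x \<in> carrier (G m)"
     "tri (a \<otimes>\<^bsub>G l\<^esub> b) x = tri a x \<otimes>\<^bsub>G m\<^esub> tri b x"
    using tri_mult_left[OF x l a b] by blast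
  note inv_tri = tri_inv_left[OF l a x m(1,2)]
  define K where "K = f1 (tri a x) (tri (inv\<^bsub>G l\<^esub> a) x)"
  have K_b: "f1 (tri b x) (tri (inv\<^bsub>G l\<^esub> a) x) = K"
    using f1_left_const[OF m(1) m(3) m(2) in_mcq_set[OF m(1) inv_tri(1)]] K_def by simp
  have f1_ab: "f1 (a \<otimes>\<^bsub>G l\<^esub> b) x = f1 a x" using f1_left_const[OF l g.m_closed[OF a b] a x] .
  have "s (f1 a x) (s (f1 a (inv\<^bsub>G l\<^esub> a)) v) = s K (s (f1 b x) v)"
    using f1_mult_left[OF l a b x] f1_ab K_def by (simp flip: s_simps(3))
  moreover have "s (f2 (a \<otimes>\<^bsub>G l\<^esub> b) x) w = s (f2 a x) w + s K (s (f2 b x) w)"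
    using f2_mult_left[OF l a b x] K_b by (simp add: s_simps)
  moreover have "\<phi>1 (a \<otimes>\<^bsub>G l\<^esub> b) x = \<phi>1 a x + s K (\<phi>1 b x) + \<phi>2 (tri a x) (tri b x)
      - s (f1 a x) (\<phi>2 a b)"
    using phi1_mult_left[OF l a b x] f1_ab K_def by (simp add: algebra_simps eq_diff_eq)
  ultimately have "ET ((a, u) \<otimes>\<^bsub>EG l\<^esub> (b, v)) (x, w) = ET (a, u) (x, w) \<otimes>\<^bsub>EG m\<^esub> ET (b, v) (x, w)"
    using m(4) inv_tri(2) f1_ab by (simp add: ext_tri_apply ext_group_mult s_simps(1) algebra_simps K_def)
  then show ?thesis using m by (auto simp: ext_tri_apply ext_group_carrier)
qed

lemma mcq_EG: "mcq Lam EG ET"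
  unfolding mcq_def
proof (intro conjI)
  show "\<forall>l\<in>Lam. group (EG l)" using group_EG by blast
  show "\<forall>l\<in>Lam. \<forall>m\<in>Lam. l \<noteq> m \<longrightarrow> carrier (EG l) \<inter> carrier (EG m) = {}"
    unfolding ext_group_carrier using group_index_unique by blast
  show "\<forall>x\<in>mcq_set Lam EG. \<forall>y\<in>mcq_set Lam EG. ET x y \<in> mcq_set Lam EG"
    unfolding mcq_set_ext_group using tri_closed by (auto simp: ext_tri_apply)
  show "\<forall>l\<in>Lam. \<forall>a\<in>carrier (EG l). \<forall>b\<in>carrier (EG l).
        ET a b = (inv\<^bsub>EG l\<^esub> b \<otimes>\<^bsub>EG l\<^esub> a) \<otimes>\<^bsub>EG l\<^esub> b"
    using ET_group by (auto simp: ext_group_carrier)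
  show "\<forall>x\<in>mcq_set Lam EG. \<forall>l\<in>Lam. ET x \<one>\<^bsub>EG l\<^esub> = x \<and>
        (\<forall>a\<in>carrier (EG l). \<forall>b\<in>carrier (EG l). ET x (a \<otimes>\<^bsub>EG l\<^esub> b) = ET (ET x a) b)"
    unfolding mcq_set_ext_group using ET_one_right ET_mult_right by (auto simp: ext_group_carrier)
  show "\<forall>x\<in>mcq_set Lam EG. \<forall>y\<in>mcq_set Lam EG. \<forall>z\<in>mcq_set Lam EG.
        ET (ET x y) z = ET (ET x z) (ET y z)"
    unfolding mcq_set_ext_group using ET_self_distrib by auto
  show "\<forall>x\<in>mcq_set Lam EG. \<forall>l\<in>Lam. \<forall>a\<in>carrier (EG l). \<forall>b\<in>carrier (EG l).
        \<exists>m\<in>Lam. ET a x \<in> carrier (EG m) \<and> ET b x \<in> carrier (EG m) \<and>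
          ET (a \<otimes>\<^bsub>EG l\<^esub> b) x = ET a x \<otimes>\<^bsub>EG m\<^esub> ET b x"
  proof (intro ballI)
    fix X l A B assume "X \<in> mcq_set Lam EG" "l \<in> Lam" "A \<in> carrier (EG l)" "B \<in> carrier (EG l)"
    then obtain x w a u b v where "X = (x, w)" "A = (a, u)" "B = (b, v)" "x \<in> S"
      "a \<in> carrier (G l)" "b \<in> carrier (G l)"
      unfolding mcq_set_ext_group ext_group_carrier by auto
    then show "\<exists>m\<in>Lam. ET A X \<in> carrier (EG m) \<and> ET B X \<in> carrier (EG m) \<and>
        ET (A \<otimes>\<^bsub>EG l\<^esub> B) X = ET A X \<otimes>\<^bsub>EG m\<^esub> ET B X"
      using ET_mult_left \<open>l \<in> Lam\<close> by simp
  qed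
qed

end

locale mcq_extension_over_ring = multiple_conjugation_quandle +
  fixes g1 g2 \<psi>1 \<psi>2 e
  assumes mcq_ext: "mcq Lam (\<lambda>l. ext_group G (*) g1 \<psi>2 l (e l)) (ext_tri tri (*) g1 g2 \<psi>1)"
begin

abbreviation EG where "EG l \<equiv> ext_group G (*) g1 \<psi>2 l (e l)"
abbreviation ET where "ET \<equiv> ext_tri tri (*) g1 g2 \<psi>1"
\<comment> \<open>a definition, not an abbreviation, so that rewriting with \<open>e_eq\<close> terminates\<close>
definition \<epsilon> where "\<epsilon> l = snd (e l)"

sublocale ext: multiple_conjugation_quandle Lam EG ET
  by unfold_locales (rule mcq_ext)

lemma e_eq: "l \<in> Lam \<Longrightarrow> e l = (\<one>\<^bsub>G l\<^esub>, \<epsilon> l)"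
proof -
  assume l: "l \<in> Lam"
  interpret h: group "EG l" using ext.group_G l .
  interpret g: group "G l" using group_G l .
  obtain c where c: "e l = (c, \<epsilon> l)" by (metis \<epsilon>_def prod.collapse)
  have "c \<in> carrier (G l)" using h.one_closed c by (simp add: ext_group_one ext_group_carrier)
  moreover have "e l \<otimes>\<^bsub>EG l\<^esub> e l = e l" using h.one_closed h.l_one by (simp add: ext_group_one)
  then have "c \<otimes>\<^bsub>G l\<^esub> c = c" using c by (simp add: ext_group_mult)
  ultimately show ?thesis using c by simp
qed

lemma psi2_one_left: "l \<in> Lam \<Longrightarrow> b \<in> carrier (G l) \<Longrightarrow> \<psi>2 \<one>\<^bsub>G l\<^esub> b = - \<epsilon> l"
proof -
  assume l: "l \<in> Lam" and b: "b \<in> carrier (G l)"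
  interpret h: group "EG l" using ext.group_G l .
  have "\<one>\<^bsub>EG l\<^esub> \<otimes>\<^bsub>EG l\<^esub> (b, 0) = (b, 0)" using b by (simp add: ext_group_carrier)
  then show ?thesis using e_eq[OF l] by (simp add: ext_group_one ext_group_mult eq_neg_iff_add_eq_0 add.commute)
qed

lemma psi2_one_right:
  "l \<in> Lam \<Longrightarrow> a \<in> carrier (G l) \<Longrightarrow> \<psi>2 a \<one>\<^bsub>G l\<^esub> = - g1 a (inv\<^bsub>G l\<^esub> a) * \<epsilon> l"
proof -
  assume l: "l \<in> Lam" and a: "a \<in> carrier (G l)"
  interpret h: group "EG l" using ext.group_G l .
  have "(a, 0) \<otimes>\<^bsub>EG l\<^esub> \<one>\<^bsub>EG l\<^esub> = (a, 0)" using a by (simp add: ext_group_carrier)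
  then show ?thesis using e_eq[OF l] a by (simp add: ext_group_one ext_group_mult eq_neg_iff_add_eq_0 add.commute)
qed

lemma psi2_cocycle:
  assumes l: "l \<in> Lam" and a: "a \<in> carrier (G l)" and b: "b \<in> carrier (G l)" and c: "c \<in> carrier (G l)"
  shows "\<psi>2 a b + \<psi>2 (a \<otimes>\<^bsub>G l\<^esub> b) c = g1 a (inv\<^bsub>G l\<^esub> a) * \<psi>2 b c + \<psi>2 a (b \<otimes>\<^bsub>G l\<^esub> c)"
proof -
  interpret h: group "EG l" using ext.group_G l .
  have "((a, 0) \<otimes>\<^bsub>EG l\<^esub> (b, 0)) \<otimes>\<^bsub>EG l\<^esub> (c, 0) = (a, 0) \<otimes>\<^bsub>EG l\<^esub> ((b, 0) \<otimes>\<^bsub>EG l\<^esub> (c, 0))"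
    using a b c by (intro h.m_assoc) (auto simp: ext_group_carrier)
  then show ?thesis by (simp add: ext_group_mult)
qed

lemma EG_inv:
  assumes l: "l \<in> Lam" and b: "b \<in> carrier (G l)"
  shows "inv\<^bsub>EG l\<^esub> (b, v) = (inv\<^bsub>G l\<^esub> b,
    \<epsilon> l - g1 (inv\<^bsub>G l\<^esub> b) (inv\<^bsub>G l\<^esub> (inv\<^bsub>G l\<^esub> b)) * v - \<psi>2 (inv\<^bsub>G l\<^esub> b) b)"
proof -
  interpret h: group "EG l" using ext.group_G l .
  interpret g: group "G l" using group_G l .
  show ?thesis
    by (rule h.inv_equality) (use b e_eq[OF l] in \<open>auto simp: ext_group_mult ext_group_one ext_group_carrier\<close>)
qed

lemma tri_group_snd:
  assumes l: "l \<in> Lam" and a: "a \<in> carrier (G l)" and b: "b \<in> carrier (G l)"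
  defines "bi \<equiv> inv\<^bsub>G l\<^esub> b"
  shows "g1 a b * u + g2 a b * v + \<psi>1 a b = \<epsilon> l - g1 bi (inv\<^bsub>G l\<^esub> bi) * v - \<psi>2 bi b
     + g1 bi (inv\<^bsub>G l\<^esub> bi) * u + \<psi>2 bi a
     + g1 (bi \<otimes>\<^bsub>G l\<^esub> a) (inv\<^bsub>G l\<^esub> (bi \<otimes>\<^bsub>G l\<^esub> a)) * v + \<psi>2 (bi \<otimes>\<^bsub>G l\<^esub> a) b"
  using ext.tri_group[OF l, of "(a, u)" "(b, v)"] EG_inv[OF l b, of v] a b unfolding bi_def[symmetric]
  by (simp add: ext_group_carrier ext_tri_apply ext_group_mult algebra_simps)

lemma tri_mult_right_snd:
  assumes x: "x \<in> S" and l: "l \<in> Lam" and a: "a \<in> carrier (G l)" and b: "b \<in> carrier (G l)"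
  shows "g1 x (a \<otimes>\<^bsub>G l\<^esub> b) * w + g2 x (a \<otimes>\<^bsub>G l\<^esub> b) * (u + g1 a (inv\<^bsub>G l\<^esub> a) * v + \<psi>2 a b)
     + \<psi>1 x (a \<otimes>\<^bsub>G l\<^esub> b) = g1 (tri x a) b * (g1 x a * w + g2 x a * u + \<psi>1 x a)
     + g2 (tri x a) b * v + \<psi>1 (tri x a) b"
  using ext.tri_mult_right[OF _ l, of "(x, w)" "(a, u)" "(b, v)"] x a b
  by (simp add: mcq_set_ext_group ext_group_carrier ext_group_mult ext_tri_apply)

lemma tri_one_right_snd:
  assumes x: "x \<in> S" and l: "l \<in> Lam"
  shows "g1 x \<one>\<^bsub>G l\<^esub> * w + g2 x \<one>\<^bsub>G l\<^esub> * \<epsilon> l + \<psi>1 x \<one>\<^bsub>G l\<^esub> = w"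
  using ext.tri_one_right[OF _ l, of "(x, w)"] x e_eq[OF l]
  by (simp add: mcq_set_ext_group ext_group_one ext_tri_apply)

lemma tri_self_distrib_snd:
  assumes x: "x \<in> S" and y: "y \<in> S" and z: "z \<in> S"
  shows "g1 (tri x y) z * (g1 x y * u + g2 x y * v + \<psi>1 x y) + g2 (tri x y) z * w + \<psi>1 (tri x y) z
     = g1 (tri x z) (tri y z) * (g1 x z * u + g2 x z * w + \<psi>1 x z)
       + g2 (tri x z) (tri y z) * (g1 y z * v + g2 y z * w + \<psi>1 y z) + \<psi>1 (tri x z) (tri y z)"
  using ext.tri_self_distrib[of "(x, u)" "(y, v)" "(z, w)"] x y z
  by (simp add: mcq_set_ext_group ext_tri_apply)

lemma tri_mult_left_snd:
  assumes x: "x \<in> S" and l: "l \<in> Lam" and a: "a \<in> carrier (G l)" and b: "b \<in> carrier (G l)"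
  shows "g1 (a \<otimes>\<^bsub>G l\<^esub> b) x * (u + g1 a (inv\<^bsub>G l\<^esub> a) * v + \<psi>2 a b) + g2 (a \<otimes>\<^bsub>G l\<^esub> b) x * w
     + \<psi>1 (a \<otimes>\<^bsub>G l\<^esub> b) x = g1 a x * u + g2 a x * w + \<psi>1 a x
     + g1 (tri a x) (tri (inv\<^bsub>G l\<^esub> a) x) * (g1 b x * v + g2 b x * w + \<psi>1 b x)
     + \<psi>2 (tri a x) (tri b x)"
proof -
  obtain m where m: "m \<in> Lam" "ET (a, u) (x, w) \<in> carrier (EG m)"
    "ET ((a, u) \<otimes>\<^bsub>EG l\<^esub> (b, v)) (x, w) = ET (a, u) (x, w) \<otimes>\<^bsub>EG m\<^esub> ET (b, v) (x, w)"
    using ext.tri_mult_left[OF _ l, of "(x, w)" "(a, u)" "(b, v)"] x a b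
    by (auto simp: mcq_set_ext_group ext_group_carrier)
  have "tri a x \<in> carrier (G m)" using m(2) by (simp add: ext_tri_apply ext_group_carrier)
  then have "inv\<^bsub>G m\<^esub> (tri a x) = tri (inv\<^bsub>G l\<^esub> a) x" using tri_inv_left[OF l a x m(1)] by simp
  then show ?thesis using m(3) by (simp add: ext_tri_apply ext_group_mult)
qed

lemma g1_left_const:
  assumes l: "l \<in> Lam" and a: "a \<in> carrier (G l)" and b: "b \<in> carrier (G l)" and x: "x \<in> S"
  shows "g1 a x = g1 b x"
proof -
  interpret g: group "G l" using group_G l .
  have "g1 (c \<otimes>\<^bsub>G l\<^esub> d) x = g1 c x" if "c \<in> carrier (G l)" "d \<in> carrier (G l)" for c d
    using arg_cong2[where f=minus, OF tri_mult_left_snd[OF x l that, of 1 0 0]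
        tri_mult_left_snd[OF x l that, of 0 0 0]]
    by (simp add: algebra_simps)
  from this[OF g.one_closed a] this[OF g.one_closed b] show ?thesis using a b by simp
qed

lemma g1_g2_group:
  assumes l: "l \<in> Lam" and a: "a \<in> carrier (G l)" and b: "b \<in> carrier (G l)"
  defines "bi \<equiv> inv\<^bsub>G l\<^esub> b"
  shows "g1 a b = g1 bi (inv\<^bsub>G l\<^esub> bi)"
    "g2 a b = g1 (bi \<otimes>\<^bsub>G l\<^esub> a) (inv\<^bsub>G l\<^esub> (bi \<otimes>\<^bsub>G l\<^esub> a)) - g1 bi (inv\<^bsub>G l\<^esub> bi)"
    "\<psi>1 a b = \<epsilon> l - \<psi>2 bi b + \<psi>2 bi a + \<psi>2 (bi \<otimes>\<^bsub>G l\<^esub> a) b"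
proof -
  note snd_eq = tri_group_snd[OF l a b, folded bi_def]
  show "g1 a b = g1 bi (inv\<^bsub>G l\<^esub> bi)"
    using arg_cong2[where f=minus, OF snd_eq[of 1 0] snd_eq[of 0 0]] by (simp add: algebra_simps)
  show "g2 a b = g1 (bi \<otimes>\<^bsub>G l\<^esub> a) (inv\<^bsub>G l\<^esub> (bi \<otimes>\<^bsub>G l\<^esub> a)) - g1 bi (inv\<^bsub>G l\<^esub> bi)"
    using arg_cong2[where f=minus, OF snd_eq[of 0 1] snd_eq[of 0 0]] by (simp add: algebra_simps)
  show "\<psi>1 a b = \<epsilon> l - \<psi>2 bi b + \<psi>2 bi a + \<psi>2 (bi \<otimes>\<^bsub>G l\<^esub> a) b"
    using snd_eq[of 0 0] by simp
qed

lemma g_psi1_mult_right: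
  assumes x: "x \<in> S" and l: "l \<in> Lam" and a: "a \<in> carrier (G l)" and b: "b \<in> carrier (G l)"
  shows "g1 x (a \<otimes>\<^bsub>G l\<^esub> b) = g1 (tri x a) b * g1 x a"
    "g2 x (a \<otimes>\<^bsub>G l\<^esub> b) = g1 (tri x a) b * g2 x a"
    "g2 x (a \<otimes>\<^bsub>G l\<^esub> b) * \<psi>2 a b + \<psi>1 x (a \<otimes>\<^bsub>G l\<^esub> b) = g1 (tri x a) b * \<psi>1 x a + \<psi>1 (tri x a) b"
proof -
  note snd_eq = tri_mult_right_snd[OF x l a b]
  show "g1 x (a \<otimes>\<^bsub>G l\<^esub> b) = g1 (tri x a) b * g1 x a"
    using arg_cong2[where f=minus, OF snd_eq[of 1 0 0] snd_eq[of 0 0 0]] by (simp add: algebra_simps)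
  show "g2 x (a \<otimes>\<^bsub>G l\<^esub> b) = g1 (tri x a) b * g2 x a"
    using arg_cong2[where f=minus, OF snd_eq[of 0 1 0] snd_eq[of 0 0 0]] by (simp add: algebra_simps)
  show "g2 x (a \<otimes>\<^bsub>G l\<^esub> b) * \<psi>2 a b + \<psi>1 x (a \<otimes>\<^bsub>G l\<^esub> b) = g1 (tri x a) b * \<psi>1 x a + \<psi>1 (tri x a) b"
    using snd_eq[of 0 0 0] by simp
qed

lemma g1_one_right: "x \<in> S \<Longrightarrow> l \<in> Lam \<Longrightarrow> g1 x \<one>\<^bsub>G l\<^esub> = 1"
  using tri_one_right_snd[of x l 0] tri_one_right_snd[of x l 1] by (simp add: add.assoc)

lemma g_psi1_self_distrib:
  assumes x: "x \<in> S" and y: "y \<in> S" and z: "z \<in> S"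
  shows "g1 (tri x y) z * g1 x y = g1 (tri x z) (tri y z) * g1 x z"
    "g1 (tri x y) z * g2 x y = g2 (tri x z) (tri y z) * g1 y z"
    "g2 (tri x y) z = g1 (tri x z) (tri y z) * g2 x z + g2 (tri x z) (tri y z) * g2 y z"
    "g1 (tri x y) z * \<psi>1 x y + \<psi>1 (tri x y) z
      = g1 (tri x z) (tri y z) * \<psi>1 x z + g2 (tri x z) (tri y z) * \<psi>1 y z + \<psi>1 (tri x z) (tri y z)"
proof -
  note snd_eq = tri_self_distrib_snd[OF x y z]
  show "g1 (tri x y) z * g1 x y = g1 (tri x z) (tri y z) * g1 x z"
    using arg_cong2[where f=minus, OF snd_eq[of 1 0 0] snd_eq[of 0 0 0]] by (simp add: algebra_simps)
  show "g1 (tri x y) z * g2 x y = g2 (tri x z) (tri y z) * g1 y z"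
    using arg_cong2[where f=minus, OF snd_eq[of 0 1 0] snd_eq[of 0 0 0]] by (simp add: algebra_simps)
  show "g2 (tri x y) z = g1 (tri x z) (tri y z) * g2 x z + g2 (tri x z) (tri y z) * g2 y z"
    using arg_cong2[where f=minus, OF snd_eq[of 0 0 1] snd_eq[of 0 0 0]] by (simp add: algebra_simps)
  show "g1 (tri x y) z * \<psi>1 x y + \<psi>1 (tri x y) z
      = g1 (tri x z) (tri y z) * \<psi>1 x z + g2 (tri x z) (tri y z) * \<psi>1 y z + \<psi>1 (tri x z) (tri y z)"
    using snd_eq[of 0 0 0] by (simp add: algebra_simps)
qed

lemma g_psi1_mult_left:
  assumes x: "x \<in> S" and l: "l \<in> Lam" and a: "a \<in> carrier (G l)" and b: "b \<in> carrier (G l)"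
  shows "g2 (a \<otimes>\<^bsub>G l\<^esub> b) x = g2 a x + g1 (tri b x) (tri (inv\<^bsub>G l\<^esub> a) x) * g2 b x"
    "g1 (a \<otimes>\<^bsub>G l\<^esub> b) x * \<psi>2 a b + \<psi>1 (a \<otimes>\<^bsub>G l\<^esub> b) x
      = \<psi>1 a x + g1 (tri a x) (tri (inv\<^bsub>G l\<^esub> a) x) * \<psi>1 b x + \<psi>2 (tri a x) (tri b x)"
proof -
  interpret g: group "G l" using group_G l .
  obtain m where m: "m \<in> Lam" "tri a x \<in> carrier (G m)" "tri b x \<in> carrier (G m)"
    using tri_mult_left[OF x l a b] by blast
  have "g1 (tri b x) (tri (inv\<^bsub>G l\<^esub> a) x) = g1 (tri a x) (tri (inv\<^bsub>G l\<^esub> a) x)"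
    using g1_left_const[OF m(1) m(3) m(2)] tri_closed[OF in_mcq_set[OF l] x] a by simp
  moreover note snd_eq = tri_mult_left_snd[OF x l a b]
  ultimately show "g2 (a \<otimes>\<^bsub>G l\<^esub> b) x = g2 a x + g1 (tri b x) (tri (inv\<^bsub>G l\<^esub> a) x) * g2 b x"
    using arg_cong2[where f=minus, OF snd_eq[of 0 0 1] snd_eq[of 0 0 0]] by (simp add: algebra_simps)
  show "g1 (a \<otimes>\<^bsub>G l\<^esub> b) x * \<psi>2 a b + \<psi>1 (a \<otimes>\<^bsub>G l\<^esub> b) x
      = \<psi>1 a x + g1 (tri a x) (tri (inv\<^bsub>G l\<^esub> a) x) * \<psi>1 b x + \<psi>2 (tri a x) (tri b x)"
    using snd_eq[of 0 0 0] by simp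
qed

lemma g1_plus_g2:
  assumes l: "l \<in> Lam" and a: "a \<in> carrier (G l)" and b: "b \<in> carrier (G l)"
  shows "g1 a b + g2 a b = g1 a (inv\<^bsub>G l\<^esub> a \<otimes>\<^bsub>G l\<^esub> b)"
proof -
  interpret g: group "G l" using group_G l .
  define bi where "bi = inv\<^bsub>G l\<^esub> b"
  have bi: "bi \<in> carrier (G l)" using b bi_def by simp
  have "g1 a (inv\<^bsub>G l\<^esub> a \<otimes>\<^bsub>G l\<^esub> b) = g1 (bi \<otimes>\<^bsub>G l\<^esub> a) (inv\<^bsub>G l\<^esub> (bi \<otimes>\<^bsub>G l\<^esub> a))"
    using g1_left_const[OF l a _ in_mcq_set[OF l], of "bi \<otimes>\<^bsub>G l\<^esub> a" "inv\<^bsub>G l\<^esub> a \<otimes>\<^bsub>G l\<^esub> b"] a b bi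
    by (simp add: g.inv_mult_group bi_def)
  then show ?thesis using g1_g2_group(1,2)[OF l a b] bi_def by simp
qed

lemma psi1_psi2_group:
  assumes l: "l \<in> Lam" and a: "a \<in> carrier (G l)" and b: "b \<in> carrier (G l)"
  shows "g1 b (inv\<^bsub>G l\<^esub> b) * \<psi>1 a b + \<psi>2 b ((inv\<^bsub>G l\<^esub> b \<otimes>\<^bsub>G l\<^esub> a) \<otimes>\<^bsub>G l\<^esub> b) = \<psi>2 a b"
proof -
  interpret g: group "G l" using group_G l .
  define bi where "bi = inv\<^bsub>G l\<^esub> b"
  have bi: "bi \<in> carrier (G l)" using b bi_def by simp
  define c where "c = (bi \<otimes>\<^bsub>G l\<^esub> a) \<otimes>\<^bsub>G l\<^esub> b"
  define F where "F = g1 b (inv\<^bsub>G l\<^esub> b)"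
  have b_bi_a: "b \<otimes>\<^bsub>G l\<^esub> (bi \<otimes>\<^bsub>G l\<^esub> a) = a"
    using a b unfolding bi_def by (simp add: g.m_assoc[symmetric])
  have F_bi_a: "F * \<psi>2 bi a = \<psi>2 b bi - \<epsilon> l - \<psi>2 b (bi \<otimes>\<^bsub>G l\<^esub> a)"
    using psi2_cocycle[OF l b bi a] psi2_one_left[OF l a] b unfolding F_def bi_def
    by (simp add: algebra_simps)
  have F_bi_a_b: "F * \<psi>2 (bi \<otimes>\<^bsub>G l\<^esub> a) b = \<psi>2 b (bi \<otimes>\<^bsub>G l\<^esub> a) + \<psi>2 a b - \<psi>2 b c"
    using psi2_cocycle[OF l b _ b, of "bi \<otimes>\<^bsub>G l\<^esub> a"] b_bi_a a bi unfolding F_def c_def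
    by (simp add: g.m_assoc algebra_simps)
  have F_bi_b: "F * \<psi>2 bi b = \<psi>2 b bi - \<epsilon> l + F * \<epsilon> l"
    using psi2_cocycle[OF l b bi b] psi2_one_left[OF l b] psi2_one_right[OF l b] b
    unfolding F_def bi_def by (simp add: algebra_simps)
  have "F * \<psi>1 a b = F * \<epsilon> l - F * \<psi>2 bi b + F * \<psi>2 bi a + F * \<psi>2 (bi \<otimes>\<^bsub>G l\<^esub> a) b"
    using g1_g2_group(3)[OF l a b] unfolding bi_def by (simp add: ring_distribs)
  also have "\<dots> = \<psi>2 a b - \<psi>2 b c" unfolding F_bi_a F_bi_a_b F_bi_b by (simp add: algebra_simps)
  finally show ?thesis unfolding F_def c_def bi_def by simp
qed

lemma alexander_pair_g: "alexander_pair Lam G tri g1 g2"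
  unfolding alexander_pair_def
proof (intro conjI ballI)
  fix l a b assume "l \<in> Lam" "a \<in> carrier (G l)" "b \<in> carrier (G l)"
  then show "g1 a b + g2 a b = g1 a (inv\<^bsub>G l\<^esub> a \<otimes>\<^bsub>G l\<^esub> b)" by (rule g1_plus_g2)
next
  fix l a b x assume "l \<in> Lam" "a \<in> carrier (G l)" "b \<in> carrier (G l)" "x \<in> S"
  then show "g1 a x = g1 b x"
    and "g2 (a \<otimes>\<^bsub>G l\<^esub> b) x = g2 a x + g1 (tri b x) (tri (inv\<^bsub>G l\<^esub> a) x) * g2 b x"
    using g1_left_const g_psi1_mult_left(1) by blast+
next
  fix x l assume "x \<in> S" "l \<in> Lam"
  then show "g1 x \<one>\<^bsub>G l\<^esub> = 1" by (rule g1_one_right)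
  fix a b assume "a \<in> carrier (G l)" "b \<in> carrier (G l)"
  then show "g1 x (a \<otimes>\<^bsub>G l\<^esub> b) = g1 (tri x a) b * g1 x a"
    and "g2 x (a \<otimes>\<^bsub>G l\<^esub> b) = g1 (tri x a) b * g2 x a"
    using g_psi1_mult_right(1,2) \<open>x \<in> S\<close> \<open>l \<in> Lam\<close> by blast+
next
  fix x y z assume "x \<in> S" "y \<in> S" "z \<in> S"
  then show "g1 (tri x y) z * g1 x y = g1 (tri x z) (tri y z) * g1 x z"
    and "g1 (tri x y) z * g2 x y = g2 (tri x z) (tri y z) * g1 y z"
    and "g2 (tri x y) z = g1 (tri x z) (tri y z) * g2 x z + g2 (tri x z) (tri y z) * g2 y z"
    using g_psi1_self_distrib(1-3) by blast+
qed

lemma twisted_cocycle_g: "twisted_cocycle Lam G tri (*) g1 g2 \<psi>1 \<psi>2"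
  unfolding twisted_cocycle_def
  using psi2_cocycle psi1_psi2_group g_psi1_mult_right(3) g_psi1_self_distrib(4) g_psi1_mult_left(2)
  by blast

end

lemma mcq_ext_group:
  assumes "mcq Lam G tri" and "lmodule s" and "aug_alexander_pair Lam G tri s f1 f2 \<phi>1 \<phi>2"
  shows "mcq Lam (\<lambda>l. ext_group G s f1 \<phi>2 l (\<one>\<^bsub>G l\<^esub>, - \<phi>2 \<one>\<^bsub>G l\<^esub> \<one>\<^bsub>G l\<^esub>))
    (ext_tri tri s f1 f2 \<phi>1)"
proof -
  interpret augmented_mcq_alexander_pair Lam G tri f1 f2 s \<phi>1 \<phi>2
    using assms by unfold_locales (auto simp: aug_alexander_pair_def)
  show ?thesis by (rule mcq_EG)
qed

lemma inv_ext_group: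
  assumes "mcq Lam G tri" and "lmodule s" and "aug_alexander_pair Lam G tri s f1 f2 \<phi>1 \<phi>2"
    and "l \<in> Lam" and "a \<in> carrier (G l)"
  shows "inv\<^bsub>ext_group G s f1 \<phi>2 l (\<one>\<^bsub>G l\<^esub>, - \<phi>2 \<one>\<^bsub>G l\<^esub> \<one>\<^bsub>G l\<^esub>)\<^esub> (a, u)
    = (inv\<^bsub>G l\<^esub> a, - s (f1 a a) u - \<phi>2 (inv\<^bsub>G l\<^esub> a) a - \<phi>2 \<one>\<^bsub>G l\<^esub> \<one>\<^bsub>G l\<^esub>)"
proof -
  interpret augmented_mcq_alexander_pair Lam G tri f1 f2 s \<phi>1 \<phi>2
    using assms by unfold_locales (auto simp: aug_alexander_pair_def)
  show ?thesis using EG_inv assms(4,5) .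
qed

lemma aug_alexander_pair_of_mcq_ext:
  assumes "mcq Lam G tri"
    and "mcq Lam (\<lambda>l. ext_group G (*) g1 \<psi>2 l (e l)) (ext_tri tri (*) g1 g2 \<psi>1)"
  shows "aug_alexander_pair Lam G tri (*) g1 g2 \<psi>1 \<psi>2"
proof -
  interpret mcq_extension_over_ring Lam G tri g1 g2 \<psi>1 \<psi>2 e
    using assms by unfold_locales
  show ?thesis
    unfolding aug_alexander_pair_def using alexander_pair_g twisted_cocycle_g ..
qed

theorem proposition2p4:
  fixes Lam :: "'l set" and G :: "'l \<Rightarrow> 'a monoid" and tri :: "'a \<Rightarrow> 'a \<Rightarrow> 'a"
    and s :: "'r::ring_1 \<Rightarrow> 'm::ab_group_add \<Rightarrow> 'm"
    and f1 f2 :: "'a \<Rightarrow> 'a \<Rightarrow> 'r" and \<phi>1 \<phi>2 :: "'a \<Rightarrow> 'a \<Rightarrow> 'm"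
    and g1 g2 \<psi>1 \<psi>2 :: "'a \<Rightarrow> 'a \<Rightarrow> 'r"
  assumes X: "mcq Lam G tri"
    and M: "lmodule s"
  shows "(aug_alexander_pair Lam G tri s f1 f2 \<phi>1 \<phi>2 \<longrightarrow>
            mcq Lam (\<lambda>l. ext_group G s f1 \<phi>2 l (\<one>\<^bsub>G l\<^esub>, - \<phi>2 \<one>\<^bsub>G l\<^esub> \<one>\<^bsub>G l\<^esub>))
                (ext_tri tri s f1 f2 \<phi>1) \<and>
            (\<forall>l\<in>Lam. \<forall>a\<in>carrier (G l). \<forall>u.
               inv\<^bsub>ext_group G s f1 \<phi>2 l (\<one>\<^bsub>G l\<^esub>, - \<phi>2 \<one>\<^bsub>G l\<^esub> \<one>\<^bsub>G l\<^esub>)\<^esub> (a, u)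
                 = (inv\<^bsub>G l\<^esub> a,
                    - s (f1 a a) u - \<phi>2 (inv\<^bsub>G l\<^esub> a) a - \<phi>2 \<one>\<^bsub>G l\<^esub> \<one>\<^bsub>G l\<^esub>)))
       \<and> ((\<exists>e. mcq Lam (\<lambda>l. ext_group G (*) g1 \<psi>2 l (e l)) (ext_tri tri (*) g1 g2 \<psi>1)) \<longrightarrow>
            aug_alexander_pair Lam G tri (*) g1 g2 \<psi>1 \<psi>2)"
  using mcq_ext_group[OF X M] inv_ext_group[OF X M] aug_alexander_pair_of_mcq_ext[OF X]
  by blast

end
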